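(* Fix $r_0,u_0,\Lambda>0$ and $(\mathring g,\mathring\lambda_g,\mathring e_g)\in D$. There exist $\varepsilon>0$ and a constant $C>0$ depending only on $r_0,u_0,\mathring g,\Lambda$ (and not on $\mathring f$) such that for every $(\mathring f,\mathring\lambda_f,\mathring e_f)\in D$ with $d:=\|\mathring f-\mathring g\|_{L^\infty}<\varepsilon$: $$\|\mathring\lambda_f\|_{L^\infty}\le C,\qquad \|\mathring e_f\|_{L^\infty}\le C,$$ and each of the quantities $$\|e^{\mathring\lambda_f}-e^{\mathring\lambda_g}\|_{L^\infty},\ \|e^{\mathring\lambda_f}\mathring e_f-e^{\mathring\lambda_g}\mathring e_g\|_{L^\infty},\ \|\mathring e_f-\mathring e_g\|_{L^\infty},\ \|\mathring\lambda_f-\mathring\lambda_g\|_{L^\infty},\ \|e^{2\mathring\lambda_f}\mathring e_f^2-e^{2\mathring\lambda_g}\mathring e_g^2\|_{L^\infty},\ \|e^{2\mathring\lambda_f}-e^{2\mathring\lambda_g}\|_{L^\infty}$$ is bounded by $Cd$.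
   Context: Units with gravitational constant and speed of light equal to $1$; $q\in\mathbb R$ is a fixed charge parameter. For $x\in\mathbb R^3$ write $r=|x|$. A function $h(x,v)$ on $\mathbb R^6$ is spherically symmetric if $h(Ax,Av)=h(x,v)$ for all $A\in SO(3)$. Constraint equations for initial data: given $\mathring f\ge 0$, functions $\mathring\lambda(r),\mathring\mu(r),\mathring e(r)$ on $[0,\infty)$ with $e^{-2\mathring\lambda}(2r\mathring\lambda'-1)+1=8\pi r^2\mathring\rho$, $e^{-2\mathring\lambda}(2r\mathring\mu'-1)+1=8\pi r^2\mathring p$, $\partial_r(r^2e^{\mathring\lambda}\mathring e)=qr^2e^{\mathring\lambda}\mathring M$, where $\mathring\rho=\int_{\mathbb R^3}\mathring f\sqrt{1+|v|^2}\,dv+\tfrac12 e^{2\mathring\lambda}\mathring e^2$, $\mathring p=\int_{\mathbb R^3}(\tfrac{x\cdot v}{r})^2\mathring f\,\tfrac{dv}{\sqrt{1+|v|^2}}-\tfrac12 e^{2\mathring\lambda}\mathring e^2$, $\mathring M=\int_{\mathbb R^3}\mathring f\,dv$; a regular solution of the constraints additionally has $\mathring\lambda\ge0$, $\mathring\mu\le0$, these functions $C^1$, and $\lim_{r\to\infty}\mathring\lambda=\lim_{r\to\infty}\mathring\mu=\mathring\lambda(0)=\lim_{r\to\infty}\mathring e=\mathring e(0)=0$. For $r_0,u_0,\Lambda>0$, $D$ is the set of triples $(\mathring f,\mathring\lambda,\mathring e)$ with $\mathring f\in C^\infty(\mathbb R^6)$ nonnegative, spherically symmetric, $\operatorname{supp}\mathring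 f\subset B(r_0)\times B(u_0)$, satisfying $8\pi\int_0^r s^2\int_{\mathbb R^3}\mathring f(s,v)\sqrt{1+|v|^2}\,dv\,ds<r$ for all $r>0$, and such that $(\mathring\lambda,\mathring e)$ (with the corresponding $\mathring\mu$) is a regular solution of the constraint equations with $\|\mathring\lambda\|_{L^\infty}\le\Lambda$. *)

theory Defs
  imports "HOL-Analysis.Analysis"
begin

type_synonym vec3 = "real ^ 3"

coinductive smooth_fun :: "('a::euclidean_space \<Rightarrow> real) \<Rightarrow> bool" where
  "F differentiable_on UNIV \<Longrightarrow>
   (\<forall>b\<in>Basis. smooth_fun (\<lambda>p. frechet_derivative F (at p) b)) \<Longrightarrow> smooth_fun F"

definition SO3 :: "(real^3^3) set" where
  "SO3 = {A. orthogonal_matrix A \<and> det A = 1}"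

definition spherically_symmetric :: "(vec3 \<Rightarrow> vec3 \<Rightarrow> real) \<Rightarrow> bool" where
  "spherically_symmetric h \<longleftrightarrow> (\<forall>A\<in>SO3. \<forall>x v. h (A *v x) (A *v v) = h x v)"

text \<open>A point of R^3 with modulus r (r \<ge> 0); radial quantities are evaluated there.\<close>
definition radpt :: "real \<Rightarrow> vec3" where
  "radpt r = r *\<^sub>R axis 1 1"

definition rho_kin :: "(vec3 \<Rightarrow> vec3 \<Rightarrow> real) \<Rightarrow> real \<Rightarrow> real" where
  "rho_kin f r = (LINT v|lborel. f (radpt r) v * sqrt (1 + (norm v)\<^sup>2))"

definition rho0 :: "(vec3 \<Rightarrow> vec3 \<Rightarrow> real) \<Rightarrow> (real \<Rightarrow> real) \<Rightarrow> (real \<Rightarrow> real) \<Rightarrow> real \<Rightarrow> real" where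
  "rho0 f lam e r = rho_kin f r + (1/2) * exp (2 * lam r) * (e r)\<^sup>2"

text \<open>For x = radpt r with r > 0 one has (x \<bullet> v)/r = v \$ 1.\<close>
definition p0 :: "(vec3 \<Rightarrow> vec3 \<Rightarrow> real) \<Rightarrow> (real \<Rightarrow> real) \<Rightarrow> (real \<Rightarrow> real) \<Rightarrow> real \<Rightarrow> real" where
  "p0 f lam e r = (LINT v|lborel. (v $ 1)\<^sup>2 * f (radpt r) v / sqrt (1 + (norm v)\<^sup>2))
                  - (1/2) * exp (2 * lam r) * (e r)\<^sup>2"

definition M0 :: "(vec3 \<Rightarrow> vec3 \<Rightarrow> real) \<Rightarrow> real \<Rightarrow> real" where
  "M0 f r = (LINT v|lborel. f (radpt r) v)"

definition C1_half :: "(real \<Rightarrow> real) \<Rightarrow> bool" where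
  "C1_half h \<longleftrightarrow> (\<exists>h'. continuous_on {0..} h' \<and>
      (\<forall>r\<ge>0. (h has_real_derivative h' r) (at r within {0..})))"

definition regular_solution ::
  "real \<Rightarrow> (vec3 \<Rightarrow> vec3 \<Rightarrow> real) \<Rightarrow> (real \<Rightarrow> real) \<Rightarrow> (real \<Rightarrow> real) \<Rightarrow> (real \<Rightarrow> real) \<Rightarrow> bool" where
  "regular_solution q f lam mu e \<longleftrightarrow>
     C1_half lam \<and> C1_half mu \<and> C1_half e \<and>
     (\<forall>r\<ge>0. \<exists>lam' mu'.
        (lam has_real_derivative lam') (at r within {0..}) \<and>
        (mu has_real_derivative mu') (at r within {0..}) \<and>
        exp (-2 * lam r) * (2 * r * lam' - 1) + 1 = 8 * pi * r\<^sup>2 * rho0 f lam e r \<and>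
        exp (-2 * lam r) * (2 * r * mu' - 1) + 1 = 8 * pi * r\<^sup>2 * p0 f lam e r \<and>
        ((\<lambda>s. s\<^sup>2 * exp (lam s) * e s) has_real_derivative
            q * r\<^sup>2 * exp (lam r) * M0 f r) (at r within {0..})) \<and>
     (\<forall>r\<ge>0. lam r \<ge> 0 \<and> mu r \<le> 0) \<and>
     (lam \<longlongrightarrow> 0) at_top \<and> (mu \<longlongrightarrow> 0) at_top \<and> (e \<longlongrightarrow> 0) at_top \<and>
     lam 0 = 0 \<and> e 0 = 0"

definition D :: "real \<Rightarrow> real \<Rightarrow> real \<Rightarrow> real \<Rightarrow>
    ((vec3 \<Rightarrow> vec3 \<Rightarrow> real) \<times> (real \<Rightarrow> real) \<times> (real \<Rightarrow> real)) set" where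
  "D q r0 u0 Lam = {(f, lam, e).
     smooth_fun (\<lambda>p::vec3 \<times> vec3. f (fst p) (snd p)) \<and>
     (\<forall>x v. f x v \<ge> 0) \<and>
     spherically_symmetric f \<and>
     closure {p. f (fst p) (snd p) \<noteq> 0} \<subseteq> ball 0 r0 \<times> ball 0 u0 \<and>
     (\<forall>r>0. 8 * pi * (LBINT s=0..r. s\<^sup>2 * rho_kin f s) < r) \<and>
     (\<exists>mu. regular_solution q f lam mu e) \<and>
     (\<forall>r\<ge>0. \<bar>lam r\<bar> \<le> Lam)}"

definition sup_dist :: "(vec3 \<Rightarrow> vec3 \<Rightarrow> real) \<Rightarrow> (vec3 \<Rightarrow> vec3 \<Rightarrow> real) \<Rightarrow> real" where
  "sup_dist f g = (SUP p\<in>UNIV. \<bar>f (fst p) (snd p) - g (fst p) (snd p)\<bar>)"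

end

theory Submission
  imports Defs
begin

text \<open>
  In terms of the mass function \<open>A = r (1 - exp (-2 \<lambda>))\<close> and the charge function
  \<open>Q = r\<^sup>2 exp \<lambda> e\<close>, the constraint equations read \<open>A' = 8 \<pi> r\<^sup>2 \<rho>_kin + 4 \<pi> Q\<^sup>2 / r\<^sup>2\<close>
  and \<open>Q' = q r\<^sup>2 exp \<lambda> M\<close>, and beyond \<open>r0\<close> only the field term \<open>4 \<pi> Q(r0)\<^sup>2 / r\<^sup>2\<close>
  survives. For two data at distance \<open>d\<close> the gaps \<open>a = A\<^sub>f - A\<^sub>g\<close> and
  \<open>b = Q\<^sub>f - Q\<^sub>g\<close> obey \<open>|a'| \<le> C (d + |b|)\<close> and, because
  \<open>|\<lambda>\<^sub>f - \<lambda>\<^sub>g| \<le> C |a| / r\<close>, also \<open>|b'| \<le> C (d + |a|)\<close> on \<open>[0, r0]\<close>.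
  Gronwall's inequality for \<open>d\<^sup>2 + a\<^sup>2 + b\<^sup>2\<close> bounds \<open>a\<close> and \<open>b\<close> by \<open>C d\<close> there;
  integrating \<open>a'\<close> once more gives \<open>|a| \<le> C d r\<close> on \<open>[0, r0]\<close> and \<open>|a| \<le> C d\<close>
  beyond. Hence \<open>|exp (-2 \<lambda>\<^sub>f) - exp (-2 \<lambda>\<^sub>g)| = |a| / r \<le> C d\<close>, so
  \<open>|\<lambda>\<^sub>f - \<lambda>\<^sub>g| \<le> C d\<close>; feeding this back gives \<open>|b'| \<le> C d r\<^sup>2\<close>, so
  \<open>|b| \<le> C d r\<^sup>2\<close>, which is the estimate for \<open>exp \<lambda> e = Q / r\<^sup>2\<close>. All constants depend on \<open>f\<close> only through \<open>d \<le> 1\<close>, which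
  bounds \<open>|f|\<close> by \<open>1 + sup |g|\<close>.
\<close>

section \<open>Differential inequalities\<close>

lemma DERIV_nonpos_imp_decreasing_within:
  fixes h h' :: "real \<Rightarrow> real"
  assumes "a \<le> b" and "{a..b} \<subseteq> S"
    and deriv: "\<And>x. a \<le> x \<Longrightarrow> x \<le> b \<Longrightarrow> (h has_real_derivative h' x) (at x within S)"
    and nonpos: "\<And>x. a < x \<Longrightarrow> x < b \<Longrightarrow> h' x \<le> 0"
  shows "h b \<le> h a"
proof (rule DERIV_nonpos_imp_decreasing_open[OF \<open>a \<le> b\<close>])
  fix x assume x: "a < x" "x < b"
  have "x \<in> interior S"
    using x interior_mono[OF \<open>{a..b} \<subseteq> S\<close>] by auto
  then have "at x within S = at x" by (rule at_within_interior)
  with deriv[of x] nonpos[of x] x show "\<exists>y. DERIV h x :> y \<and> y \<le> 0" by auto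
next
  show "continuous_on {a..b} h"
  proof (clarsimp simp: continuous_on_eq_continuous_within)
    fix x assume "a \<le> x" "x \<le> b"
    then show "continuous (at x within {a..b}) h"
      by (rule continuous_within_subset[OF DERIV_continuous[OF deriv] \<open>{a..b} \<subseteq> S\<close>])
  qed
qed

lemma DERIV_abs_diff_le_majorant:
  fixes h h' k k' :: "real \<Rightarrow> real"
  assumes "a \<le> b" and "{a..b} \<subseteq> S"
    and "\<And>x. a \<le> x \<Longrightarrow> x \<le> b \<Longrightarrow> (h has_real_derivative h' x) (at x within S)"
    and "\<And>x. a \<le> x \<Longrightarrow> x \<le> b \<Longrightarrow> (k has_real_derivative k' x) (at x within S)"
    and "\<And>x. a < x \<Longrightarrow> x < b \<Longrightarrow> \<bar>h' x\<bar> \<le> k' x"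
  shows "\<bar>h b - h a\<bar> \<le> k b - k a"
proof -
  have "(\<lambda>x. s * h x - k x) b \<le> (\<lambda>x. s * h x - k x) a" if s: "\<bar>s\<bar> = 1" for s :: real
  proof (rule DERIV_nonpos_imp_decreasing_within[OF assms(1,2)])
    fix x assume "a \<le> x" "x \<le> b"
    then show "((\<lambda>x. s * h x - k x) has_real_derivative s * h' x - k' x) (at x within S)"
      by (intro DERIV_diff DERIV_cmult assms(3,4))
  next
    fix x assume "a < x" "x < b"
    then have "s * h' x \<le> \<bar>h' x\<bar>"
      using s abs_ge_self[of "s * h' x"] by (simp add: abs_mult)
    with assms(5) \<open>a < x\<close> \<open>x < b\<close> show "s * h' x - k' x \<le> 0"
      by fastforce
  qed
  from this[of 1] this[of "-1"] show ?thesis by auto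
qed

lemma gronwall_within:
  fixes V V' :: "real \<Rightarrow> real"
  assumes "a \<le> b" and "{a..b} \<subseteq> S"
    and deriv: "\<And>x. a \<le> x \<Longrightarrow> x \<le> b \<Longrightarrow> (V has_real_derivative V' x) (at x within S)"
    and growth: "\<And>x. a < x \<Longrightarrow> x < b \<Longrightarrow> V' x \<le> K * V x"
  shows "V b \<le> V a * exp (K * (b - a))"
proof -
  have "(\<lambda>x. exp (- K * x) * V x) b \<le> (\<lambda>x. exp (- K * x) * V x) a"
  proof (rule DERIV_nonpos_imp_decreasing_within[OF assms(1,2)])
    fix x assume "a \<le> x" "x \<le> b"
    then show "((\<lambda>x. exp (- K * x) * V x) has_real_derivative
        exp (- K * x) * (V' x - K * V x)) (at x within S)"
      by (auto intro!: derivative_eq_intros deriv simp: algebra_simps)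
  next
    fix x assume "a < x" "x < b"
    then show "exp (- K * x) * (V' x - K * V x) \<le> 0"
      using growth by (simp add: mult_nonneg_nonpos)
  qed
  then have "exp (K * b) * (exp (- K * b) * V b) \<le> exp (K * b) * (exp (- K * a) * V a)"
    by (rule mult_left_mono) simp
  then show ?thesis
    by (simp add: algebra_simps flip: exp_add)
qed

lemma DERIV_zero_imp_constant_beyond:
  fixes h h' :: "real \<Rightarrow> real"
  assumes "0 \<le> R" "R \<le> r"
    and deriv: "\<And>x. 0 \<le> x \<Longrightarrow> (h has_real_derivative h' x) (at x within {0..})"
    and far: "\<And>x. R \<le> x \<Longrightarrow> h' x = 0"
  shows "h r = h R"
proof -
  have "(h has_field_derivative 0) (at x within {R..})" if "R \<le> x" for x
  proof -
    have "(h has_real_derivative h' x) (at x within {0..})"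
      using that \<open>0 \<le> R\<close> by (intro deriv) simp
    from has_field_derivative_subset[OF this, of "{R..}"] show ?thesis
      using far[OF that] \<open>0 \<le> R\<close> by auto
  qed
  then obtain C where "\<forall>x\<in>{R..}. h x = C"
    using has_field_derivative_zero_constant[OF convex_real_interval(1)] by blast
  then show ?thesis using \<open>R \<le> r\<close> by simp
qed

lemma abs_le_quadratic_if_DERIV:
  fixes h h' :: "real \<Rightarrow> real"
  assumes "h 0 = 0" and "0 \<le> c" "0 \<le> R" "0 \<le> r"
    and deriv: "\<And>x. 0 \<le> x \<Longrightarrow> (h has_real_derivative h' x) (at x within {0..})"
    and near: "\<And>x. 0 < x \<Longrightarrow> x < R \<Longrightarrow> \<bar>h' x\<bar> \<le> c * x\<^sup>2"
    and far: "\<And>x. R \<le> x \<Longrightarrow> h' x = 0"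
  shows "\<bar>h r\<bar> \<le> c * R / 3 * r\<^sup>2"
proof -
  have cubic: "\<bar>h s\<bar> \<le> c * s ^ 3 / 3" if "0 \<le> s" "s \<le> R" for s
  proof -
    have "\<bar>h s - h 0\<bar> \<le> c * s ^ 3 / 3 - c * 0 ^ 3 / 3"
    proof (rule DERIV_abs_diff_le_majorant[where S = "{0..}" and k' = "\<lambda>x. c * x\<^sup>2"])
      fix x :: real assume "0 \<le> x"
      then show "(h has_real_derivative h' x) (at x within {0..})" by (rule deriv)
      show "((\<lambda>x. c * x ^ 3 / 3) has_real_derivative c * x\<^sup>2) (at x within {0..})"
        by (auto intro!: derivative_eq_intros simp: power2_eq_square)
    next
      fix x :: real assume "0 < x" "x < s"
      then show "\<bar>h' x\<bar> \<le> c * x\<^sup>2" using near \<open>s \<le> R\<close> by simp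
    qed (use \<open>0 \<le> s\<close> in auto)
    then show ?thesis using \<open>h 0 = 0\<close> by simp
  qed
  show ?thesis
  proof (cases "r \<le> R")
    case True
    have "r ^ 3 \<le> R * r\<^sup>2"
      using mult_right_mono[OF True, of "r\<^sup>2"] by (simp add: power3_eq_cube power2_eq_square mult.assoc)
    from mult_left_mono[OF this \<open>0 \<le> c\<close>] cubic[OF \<open>0 \<le> r\<close> True] show ?thesis
      by (simp add: mult.assoc)
  next
    case False
    then have "R \<le> r" by simp
    then have "h r = h R"
      by (rule DERIV_zero_imp_constant_beyond[OF \<open>0 \<le> R\<close> _ deriv far])
    moreover have cube: "R ^ 3 \<le> R * r\<^sup>2"
      using mult_left_mono[OF power_mono[OF \<open>R \<le> r\<close> \<open>0 \<le> R\<close>, of 2] \<open>0 \<le> R\<close>]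
      by (simp add: power3_eq_cube power2_eq_square)
    ultimately show ?thesis
      using mult_left_mono[OF cube \<open>0 \<le> c\<close>] cubic[OF \<open>0 \<le> R\<close> order_refl] by (simp add: mult.assoc)
  qed
qed

section \<open>Velocity integrals and solutions of the constraint equations\<close>

lemma integrable_if_support_cball:
  fixes h :: "'a::euclidean_space \<Rightarrow> real"
  assumes "continuous_on UNIV h" and "\<And>v. R \<le> norm v \<Longrightarrow> h v = 0"
  shows "integrable lborel h"
proof -
  have "h = (\<lambda>v. indicator (cball 0 R) v *\<^sub>R h v)"
    using assms(2) by (auto simp: indicator_def fun_eq_iff)
  moreover have "integrable lborel (\<lambda>v. indicator (cball 0 R) v *\<^sub>R h v)"
    by (rule borel_integrable_compact[OF compact_cball continuous_on_subset[OF assms(1)]]) simp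
  ultimately show ?thesis by simp
qed

lemma abs_integral_le_if_support_cball:
  fixes h :: "'a::euclidean_space \<Rightarrow> real"
  assumes "continuous_on UNIV h" and "\<And>v. R \<le> norm v \<Longrightarrow> h v = 0"
    and bound: "\<And>v. norm v \<le> R \<Longrightarrow> \<bar>h v\<bar> \<le> B"
  shows "\<bar>LINT v|lborel. h v\<bar> \<le> B * measure lborel (cball (0::'a) R)"
proof -
  have finite: "emeasure lborel (cball (0::'a) R) < \<infinity>"
    by (rule emeasure_compact_finite[OF compact_cball])
  have "\<bar>LINT v|lborel. h v\<bar> \<le> (LINT v|lborel. \<bar>h v\<bar>)"
    by (rule integral_abs_bound)
  also have "\<dots> \<le> (LINT v|lborel. indicator (cball (0::'a) R) v * B)"
  proof (rule integral_mono[OF integrable_abs[OF integrable_if_support_cball[of h R, OF assms(1,2)]]])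
    show "integrable lborel (\<lambda>v. indicator (cball (0::'a) R) v * B)"
      using finite by (simp add: integrable_real_mult_indicator)
    show "\<bar>h v\<bar> \<le> indicator (cball 0 R) v * B" for v
      using bound[of v] assms(2)[of v] by (cases "norm v \<le> R") (auto simp: indicator_def)
  qed
  also have "\<dots> = B * measure lborel (cball (0::'a) R)"
    using finite by (simp add: measure_def)
  finally show ?thesis .
qed

lemma abs_le_sup_dist:
  assumes "\<And>x v. \<bar>f x v\<bar> \<le> Bf" and "\<And>x v. \<bar>g x v\<bar> \<le> Bg"
  shows "\<bar>f x v - g x v\<bar> \<le> sup_dist f g"
proof -
  have "bdd_above ((\<lambda>p. \<bar>f (fst p) (snd p) - g (fst p) (snd p)\<bar>) ` UNIV)"
  proof (rule bdd_aboveI2)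
    fix p :: "vec3 \<times> vec3"
    show "\<bar>f (fst p) (snd p) - g (fst p) (snd p)\<bar> \<le> Bf + Bg"
      using assms(1)[of "fst p" "snd p"] assms(2)[of "fst p" "snd p"] by linarith
  qed
  then show ?thesis
    unfolding sup_dist_def using cSUP_upper[OF UNIV_I, of _ "(x, v)"] by fastforce
qed

definition mass_fun :: "(real \<Rightarrow> real) \<Rightarrow> real \<Rightarrow> real" where
  "mass_fun lam r = r * (1 - exp (-2 * lam r))"

definition charge_fun :: "(real \<Rightarrow> real) \<Rightarrow> (real \<Rightarrow> real) \<Rightarrow> real \<Rightarrow> real" where
  "charge_fun lam e r = r\<^sup>2 * exp (lam r) * e r"

lemma field_eq_charge_fun_div: "r \<noteq> 0 \<Longrightarrow> exp (lam r) * e r = charge_fun lam e r / r\<^sup>2"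
  by (simp add: charge_fun_def)

lemma eq_exp_neg_mult_field:
  fixes lam e :: "real \<Rightarrow> real"
  shows "e r = exp (- lam r) * (exp (lam r) * e r)"
proof -
  have "exp (- lam r) * exp (lam r) = 1"
    by (simp flip: exp_add)
  then show ?thesis
    by (metis mult.assoc mult_1)
qed

lemma rho0_eq_charge_fun:
  "8 * pi * r\<^sup>2 * rho0 f lam e r = 8 * pi * r\<^sup>2 * rho_kin f r + 4 * pi * (charge_fun lam e r)\<^sup>2 / r\<^sup>2"
proof (cases "r = 0")
  case False
  have "(charge_fun lam e r)\<^sup>2 / r\<^sup>2 = r\<^sup>2 * exp (2 * lam r) * (e r)\<^sup>2"
    using False by (simp add: charge_fun_def power_mult_distrib power2_eq_square flip: exp_add)
  then show ?thesis
    by (simp add: rho0_def algebra_simps flip: times_divide_eq_right)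
qed (simp add: charge_fun_def)

lemma norm_radpt [simp]: "norm (radpt r) = \<bar>r\<bar>"
  by (simp add: radpt_def)

locale initial_datum =
  fixes q r0 u0 Lam :: real and f :: "vec3 \<Rightarrow> vec3 \<Rightarrow> real" and lam e :: "real \<Rightarrow> real"
  assumes in_D: "(f, lam, e) \<in> D q r0 u0 Lam"
begin

lemma has_regular_solution: "\<exists>mu. regular_solution q f lam mu e"
  using in_D by (simp add: D_def)

lemma continuous_on_f: "continuous_on UNIV (\<lambda>p::vec3 \<times> vec3. f (fst p) (snd p))"
proof -
  have "smooth_fun (\<lambda>p::vec3 \<times> vec3. f (fst p) (snd p))"
    using in_D by (simp add: D_def)
  then have "(\<lambda>p::vec3 \<times> vec3. f (fst p) (snd p)) differentiable_on UNIV"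
    by (cases rule: smooth_fun.cases) auto
  then show ?thesis
    by (rule differentiable_imp_continuous_on)
qed

lemma continuous_on_velocity: "continuous_on UNIV (f x)"
proof -
  have "continuous_on UNIV ((\<lambda>p::vec3 \<times> vec3. f (fst p) (snd p)) \<circ> Pair x)"
    by (rule continuous_on_compose[OF _ continuous_on_subset[OF continuous_on_f subset_UNIV]])
       (intro continuous_intros)
  then show ?thesis by (simp add: o_def)
qed

lemma f_eq_0_outside:
  assumes "r0 \<le> norm x \<or> u0 \<le> norm v"
  shows "f x v = 0"
proof (rule ccontr)
  assume "f x v \<noteq> 0"
  then have "(x, v) \<in> closure {p. f (fst p) (snd p) \<noteq> 0}"
    using closure_subset by fastforce
  then have "(x, v) \<in> ball 0 r0 \<times> ball 0 u0"
    using in_D by (auto simp: D_def)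
  with assms show False by auto
qed

lemma bounded_f: "\<exists>B. \<forall>x v. \<bar>f x v\<bar> \<le> B"
proof -
  let ?F = "\<lambda>p::vec3 \<times> vec3. f (fst p) (snd p)"
  let ?K = "cball (0::vec3) r0 \<times> cball (0::vec3) u0"
  have "bounded (?F ` ?K)"
    by (intro compact_imp_bounded compact_continuous_image compact_Times compact_cball
        continuous_on_subset[OF continuous_on_f subset_UNIV])
  then obtain B where B: "\<forall>y\<in>?F ` ?K. norm y \<le> B"
    unfolding bounded_iff by blast
  have "\<bar>f x v\<bar> \<le> max B 0" for x v
  proof (cases "norm x \<le> r0 \<and> norm v \<le> u0")
    case True
    then have "?F (x, v) \<in> ?F ` ?K" by (intro imageI) simp
    with B have "norm (?F (x, v)) \<le> B" by blast
    then show ?thesis by simp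
  next
    case False
    then show ?thesis using f_eq_0_outside[of x v] by auto
  qed
  then show ?thesis by blast
qed

lemma lam_nonneg_le: "0 \<le> r \<Longrightarrow> 0 \<le> lam r \<and> lam r \<le> Lam"
  using in_D by (force simp: D_def regular_solution_def)

lemma lam_0: "lam 0 = 0" and e_0: "e 0 = 0"
  using has_regular_solution by (auto simp: regular_solution_def)

lemma charge_fun_DERIV:
  "0 \<le> r \<Longrightarrow> (charge_fun lam e has_real_derivative q * r\<^sup>2 * exp (lam r) * M0 f r) (at r within {0..})"
  using has_regular_solution unfolding regular_solution_def charge_fun_def by blast

lemma mass_fun_DERIV:
  assumes "0 \<le> r"
  shows "(mass_fun lam has_real_derivative
      8 * pi * r\<^sup>2 * rho_kin f r + 4 * pi * (charge_fun lam e r)\<^sup>2 / r\<^sup>2) (at r within {0..})"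
proof -
  obtain lam' where lam': "(lam has_real_derivative lam') (at r within {0..})"
    and constraint: "exp (-2 * lam r) * (2 * r * lam' - 1) + 1 = 8 * pi * r\<^sup>2 * rho0 f lam e r"
    using has_regular_solution assms unfolding regular_solution_def by blast
  have "(mass_fun lam has_real_derivative exp (-2 * lam r) * (2 * r * lam' - 1) + 1) (at r within {0..})"
    unfolding mass_fun_def [abs_def] by (auto intro!: derivative_eq_intros lam' simp: algebra_simps)
  then show ?thesis
    unfolding constraint rho0_eq_charge_fun .
qed

lemma f_radpt_eq_0: "r0 \<le> r \<Longrightarrow> f (radpt r) v = 0"
  by (rule f_eq_0_outside) auto

lemma M0_eq_0: "r0 \<le> r \<Longrightarrow> M0 f r = 0"
  by (simp add: M0_def f_radpt_eq_0)

lemma rho_kin_eq_0: "r0 \<le> r \<Longrightarrow> rho_kin f r = 0"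
  by (simp add: rho_kin_def f_radpt_eq_0)

lemma integrable_velocity_moment:
  "continuous_on UNIV w \<Longrightarrow> integrable lborel (\<lambda>v. f x v * w v)"
  by (rule integrable_if_support_cball[where R = u0])
     (auto intro: continuous_on_mult[OF continuous_on_velocity] simp: f_eq_0_outside)

lemma abs_M0_le:
  assumes "\<And>x v. \<bar>f x v\<bar> \<le> B"
  shows "\<bar>M0 f r\<bar> \<le> B * measure lborel (cball (0::vec3) u0)"
  unfolding M0_def
  by (rule abs_integral_le_if_support_cball[OF continuous_on_velocity]) (auto simp: f_eq_0_outside assms)

lemma charge_fun_eq_beyond:
  "0 \<le> r0 \<Longrightarrow> r0 \<le> r \<Longrightarrow> charge_fun lam e r = charge_fun lam e r0"
  by (rule DERIV_zero_imp_constant_beyond[OF _ _ charge_fun_DERIV]) (auto simp: M0_eq_0)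

lemma abs_charge_fun_le:
  assumes "0 \<le> r0" "0 \<le> r" and M0_le: "\<And>r. 0 \<le> r \<Longrightarrow> \<bar>M0 f r\<bar> \<le> Mb"
  shows "\<bar>charge_fun lam e r\<bar> \<le> \<bar>q\<bar> * exp Lam * Mb * r0 / 3 * r\<^sup>2"
proof (rule abs_le_quadratic_if_DERIV[OF _ _ assms(1,2) charge_fun_DERIV])
  show "charge_fun lam e 0 = 0" by (simp add: charge_fun_def)
  show "0 \<le> \<bar>q\<bar> * exp Lam * Mb"
    using M0_le[of 0] by simp
next
  fix x :: real assume "0 < x" "x < r0"
  then have "\<bar>q * x\<^sup>2 * exp (lam x) * M0 f x\<bar> \<le> \<bar>q\<bar> * x\<^sup>2 * exp Lam * Mb"
    using lam_nonneg_le[of x] M0_le[of x] by (simp add: abs_mult mult_mono mult_left_mono)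
  then show "\<bar>q * x\<^sup>2 * exp (lam x) * M0 f x\<bar> \<le> \<bar>q\<bar> * exp Lam * Mb * x\<^sup>2"
    by (simp add: algebra_simps)
next
  fix x assume "r0 \<le> x"
  then show "q * x\<^sup>2 * exp (lam x) * M0 f x = 0" by (simp add: M0_eq_0)
qed

end

section \<open>Stability\<close>

lemma abs_exp_diff_le:
  fixes x y M :: real
  assumes "x \<le> M" "y \<le> M"
  shows "\<bar>exp x - exp y\<bar> \<le> exp M * \<bar>x - y\<bar>"
proof -
  have mono: "exp b - exp a \<le> exp M * (b - a)" if "a \<le> b" "b \<le> M" for a b :: real
  proof -
    have "exp b * (1 + (a - b)) \<le> exp b * exp (a - b)"
      by (intro mult_left_mono exp_ge_add_one_self) simp
    then have "exp b - exp a \<le> exp b * (b - a)"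
      by (simp add: algebra_simps flip: exp_add)
    also have "\<dots> \<le> exp M * (b - a)"
      using that by (intro mult_right_mono) auto
    finally show ?thesis .
  qed
  show ?thesis
  proof (cases "x \<le> y")
    case True
    then show ?thesis using mono[OF True assms(2)] by (simp add: abs_if)
  next
    case False
    then show ?thesis using mono[of y x] assms(1) by (simp add: abs_if)
  qed
qed

lemma abs_exp_diff_ge:
  fixes x y m :: real
  assumes "m \<le> x" "m \<le> y"
  shows "exp m * \<bar>x - y\<bar> \<le> \<bar>exp x - exp y\<bar>"
proof -
  have mono: "exp m * (b - a) \<le> exp b - exp a" if "m \<le> a" "a \<le> b" for a b :: real
  proof -
    have "exp m * (b - a) \<le> exp a * (b - a)"
      using that by (intro mult_right_mono) auto
    also have "exp a * (1 + (b - a)) \<le> exp a * exp (b - a)"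
      by (intro mult_left_mono exp_ge_add_one_self) simp
    then have "exp a * (b - a) \<le> exp b - exp a"
      by (simp add: algebra_simps flip: exp_add)
    finally show ?thesis .
  qed
  show ?thesis
  proof (cases "x \<le> y")
    case True
    then show ?thesis using mono[OF assms(1) True] by (simp add: abs_if)
  next
    case False
    then show ?thesis using mono[of y x] assms(2) by (simp add: abs_if)
  qed
qed

lemma two_mul_le_sum_squares:
  fixes a b d A c\<^sub>1 c\<^sub>2 :: real
  assumes "0 \<le> c\<^sub>1" "0 \<le> c\<^sub>2" "0 \<le> d" and A: "\<bar>A\<bar> \<le> c\<^sub>1 * d + c\<^sub>2 * \<bar>b\<bar>"
  shows "2 * a * A \<le> (c\<^sub>1 + c\<^sub>2) * (d\<^sup>2 + a\<^sup>2 + b\<^sup>2)"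
proof -
  have "2 * a * A \<le> 2 * \<bar>a\<bar> * (c\<^sub>1 * d + c\<^sub>2 * \<bar>b\<bar>)"
  proof -
    have "2 * a * A \<le> 2 * \<bar>a\<bar> * \<bar>A\<bar>"
      by (simp add: abs_mult[symmetric] abs_le_iff)
    also have "\<dots> \<le> 2 * \<bar>a\<bar> * (c\<^sub>1 * d + c\<^sub>2 * \<bar>b\<bar>)"
      using A by (intro mult_left_mono) auto
    finally show ?thesis .
  qed
  also have "\<dots> = c\<^sub>1 * (2 * \<bar>a\<bar> * d) + c\<^sub>2 * (2 * \<bar>a\<bar> * \<bar>b\<bar>)"
    by (simp add: algebra_simps)
  also have "\<dots> \<le> c\<^sub>1 * (d\<^sup>2 + a\<^sup>2 + b\<^sup>2) + c\<^sub>2 * (d\<^sup>2 + a\<^sup>2 + b\<^sup>2)"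
  proof -
    have "2 * \<bar>a\<bar> * d \<le> d\<^sup>2 + a\<^sup>2 + b\<^sup>2" "2 * \<bar>a\<bar> * \<bar>b\<bar> \<le> d\<^sup>2 + a\<^sup>2 + b\<^sup>2"
      using sum_squares_bound[of "\<bar>a\<bar>" d, unfolded power2_abs]
        sum_squares_bound[of "\<bar>a\<bar>" "\<bar>b\<bar>", unfolded power2_abs] zero_le_power2[of b] zero_le_power2[of d]
      by linarith+
    then show ?thesis using assms by (intro add_mono mult_left_mono)
  qed
  finally show ?thesis by (simp add: algebra_simps)
qed

locale reference_datum = G: initial_datum q r0 u0 Lam g lg eg for q r0 u0 Lam g lg eg +
  fixes Bg :: real
  assumes r0_pos: "0 < r0" and g_le: "\<And>x v. \<bar>g x v\<bar> \<le> Bg"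
begin

text \<open>\<open>M_max\<close> bounds \<open>|M0|\<close> and \<open>Q_max r\<^sup>2\<close> bounds the charge function of every datum
  within distance \<open>1\<close> of \<open>g\<close>. On \<open>[0, r0]\<close> the gaps satisfy
  \<open>|a'| \<le> c_rho d + c_Q |b|\<close> and \<open>|b'| \<le> c_M d + c_lam |a|\<close>, and \<open>K_gron\<close> is the
  resulting Gronwall factor.\<close>

definition "vol_u0 = measure lborel (cball (0::vec3) u0)"
definition "M_max = (Bg + 1) * vol_u0"
definition "Q_max = \<bar>q\<bar> * exp Lam * M_max * r0 / 3"
definition "c_rho = 8 * pi * r0\<^sup>2 * sqrt (1 + u0\<^sup>2) * vol_u0"
definition "c_Q = 8 * pi * Q_max"
definition "c_M = \<bar>q\<bar> * r0\<^sup>2 * exp Lam * vol_u0"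
definition "c_lam = \<bar>q\<bar> * M_max * exp (3 * Lam) * r0 / 2"
definition "K_gron = exp ((c_rho + c_Q + c_M + c_lam) * r0 / 2)"
definition "K_metric = c_rho + c_Q * K_gron + (1 + c_Q * r0) * K_gron / r0"
definition "K_lam = exp (2 * Lam) / 2 * K_metric"
definition "K_charge = \<bar>q\<bar> * exp Lam * (vol_u0 + M_max * K_lam) * r0 / 3"
definition "C_stab = 1 + Lam + Q_max + exp Lam * K_lam + K_charge + Q_max * K_lam + K_lam
  + 2 * Q_max * K_charge + 2 * exp (2 * Lam) * K_lam"

lemma constants_nonneg:
  "0 \<le> vol_u0" "0 \<le> M_max" "0 \<le> Q_max" "0 \<le> c_rho" "0 \<le> c_Q" "0 \<le> c_M" "0 \<le> c_lam"
  "0 \<le> K_gron" "0 \<le> K_metric" "0 \<le> K_lam" "0 \<le> K_charge"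
proof -
  show "0 \<le> vol_u0" by (simp add: vol_u0_def)
  moreover have "0 \<le> Bg" using g_le[of 0 0] by simp
  ultimately show "0 \<le> M_max" by (simp add: M_max_def)
  then show "0 \<le> Q_max" using r0_pos by (simp add: Q_max_def)
  then show "0 \<le> c_Q" by (simp add: c_Q_def)
  show "0 \<le> c_rho" "0 \<le> c_M" using \<open>0 \<le> vol_u0\<close> by (simp_all add: c_rho_def c_M_def)
  show "0 \<le> c_lam" using \<open>0 \<le> M_max\<close> r0_pos by (simp add: c_lam_def)
  show "0 \<le> K_gron" by (simp add: K_gron_def)
  then show "0 \<le> K_metric"
    using \<open>0 \<le> c_rho\<close> \<open>0 \<le> c_Q\<close> r0_pos by (simp add: K_metric_def)
  then show "0 \<le> K_lam" by (simp add: K_lam_def)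
  then show "0 \<le> K_charge"
    using \<open>0 \<le> vol_u0\<close> \<open>0 \<le> M_max\<close> r0_pos by (simp add: K_charge_def)
qed

lemma C_stab_ge:
  "Lam \<le> C_stab" "Q_max \<le> C_stab" "exp Lam * K_lam \<le> C_stab" "K_charge \<le> C_stab"
  "K_charge + Q_max * K_lam \<le> C_stab" "K_lam \<le> C_stab" "2 * Q_max * K_charge \<le> C_stab"
  "2 * exp (2 * Lam) * K_lam \<le> C_stab" "0 < C_stab"
proof -
  have "0 \<le> Lam"
    using G.lam_nonneg_le[of 0] by simp
  moreover have "0 \<le> exp Lam * K_lam" "0 \<le> Q_max * K_lam" "0 \<le> Q_max * K_charge"
    "0 \<le> exp (2 * Lam) * K_lam"
    using constants_nonneg by simp_all
  ultimately show "Lam \<le> C_stab" "Q_max \<le> C_stab" "exp Lam * K_lam \<le> C_stab"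
    "K_charge \<le> C_stab" "K_charge + Q_max * K_lam \<le> C_stab" "K_lam \<le> C_stab"
    "2 * Q_max * K_charge \<le> C_stab" "2 * exp (2 * Lam) * K_lam \<le> C_stab" "0 < C_stab"
    using constants_nonneg unfolding C_stab_def by linarith+
qed

end

locale perturbed_datum = reference_datum q r0 u0 Lam g lg eg Bg +
  F: initial_datum q r0 u0 Lam f lf ef for q r0 u0 Lam g lg eg Bg f lf ef +
  fixes d :: real
  assumes close: "\<And>x v. \<bar>f x v - g x v\<bar> \<le> d" and d_le_1: "d \<le> 1"
begin

lemma d_nonneg: "0 \<le> d"
  using close[of 0 0] by simp

lemma abs_M0_le_M_max: "\<bar>M0 f r\<bar> \<le> M_max" "\<bar>M0 g r\<bar> \<le> M_max"
proof -
  have "\<bar>f x v\<bar> \<le> Bg + 1" for x v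
    using close[of x v] g_le[of x v] d_le_1 by linarith
  then show "\<bar>M0 f r\<bar> \<le> M_max"
    using F.abs_M0_le by (simp add: M_max_def vol_u0_def)
  have "\<bar>g x v\<bar> \<le> Bg + 1" for x v
    using g_le[of x v] by linarith
  then show "\<bar>M0 g r\<bar> \<le> M_max"
    using G.abs_M0_le by (simp add: M_max_def vol_u0_def)
qed

lemma abs_charge_fun_le_Q_max:
  "0 \<le> r \<Longrightarrow> \<bar>charge_fun lf ef r\<bar> \<le> Q_max * r\<^sup>2"
  "0 \<le> r \<Longrightarrow> \<bar>charge_fun lg eg r\<bar> \<le> Q_max * r\<^sup>2"
  using F.abs_charge_fun_le G.abs_charge_fun_le r0_pos abs_M0_le_M_max
  by (simp_all add: Q_max_def less_imp_le)

lemma abs_velocity_moment_diff_le: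
  assumes "continuous_on UNIV w" and "\<And>v. norm v \<le> u0 \<Longrightarrow> \<bar>w v\<bar> \<le> W"
  shows "\<bar>(LINT v|lborel. f x v * w v) - (LINT v|lborel. g x v * w v)\<bar> \<le> d * W * vol_u0"
proof -
  have "(LINT v|lborel. f x v * w v) - (LINT v|lborel. g x v * w v)
      = (LINT v|lborel. (f x v - g x v) * w v)"
    using F.integrable_velocity_moment[OF assms(1)] G.integrable_velocity_moment[OF assms(1)]
    by (simp add: left_diff_distrib)
  also have "\<bar>\<dots>\<bar> \<le> d * W * vol_u0"
    unfolding vol_u0_def
  proof (rule abs_integral_le_if_support_cball)
    show "continuous_on UNIV (\<lambda>v. (f x v - g x v) * w v)"
      by (intro continuous_on_mult continuous_on_diff F.continuous_on_velocity
          G.continuous_on_velocity assms(1))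
    show "(f x v - g x v) * w v = 0" if "u0 \<le> norm v" for v
      using that by (simp add: F.f_eq_0_outside G.f_eq_0_outside)
    show "\<bar>(f x v - g x v) * w v\<bar> \<le> d * W" if "norm v \<le> u0" for v
      using close[of x v] assms(2)[OF that] d_nonneg
      by (simp add: abs_mult mult_mono)
  qed
  finally show ?thesis .
qed

lemma abs_M0_diff_le: "\<bar>M0 f r - M0 g r\<bar> \<le> d * vol_u0"
  using abs_velocity_moment_diff_le[of "\<lambda>_. 1" 1 "radpt r"] by (simp add: M0_def)

lemma abs_rho_kin_diff_le: "\<bar>rho_kin f r - rho_kin g r\<bar> \<le> d * sqrt (1 + u0\<^sup>2) * vol_u0"
  unfolding rho_kin_def
  by (rule abs_velocity_moment_diff_le) (auto intro!: continuous_intros power_mono)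

definition "mass_gap r = mass_fun lf r - mass_fun lg r"
definition "charge_gap r = charge_fun lf ef r - charge_fun lg eg r"
definition "mass_gap' r = 8 * pi * r\<^sup>2 * (rho_kin f r - rho_kin g r)
  + 4 * pi * ((charge_fun lf ef r)\<^sup>2 - (charge_fun lg eg r)\<^sup>2) / r\<^sup>2"
definition "charge_gap' r = q * r\<^sup>2 * (exp (lf r) * M0 f r - exp (lg r) * M0 g r)"

lemma mass_gap_DERIV: "0 \<le> r \<Longrightarrow> (mass_gap has_real_derivative mass_gap' r) (at r within {0..})"
  unfolding mass_gap_def [abs_def] mass_gap'_def
  by (rule DERIV_cong[OF DERIV_diff[OF F.mass_fun_DERIV G.mass_fun_DERIV]])
     (auto simp: algebra_simps diff_divide_distrib)

lemma charge_gap_DERIV: "0 \<le> r \<Longrightarrow> (charge_gap has_real_derivative charge_gap' r) (at r within {0..})"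
  unfolding charge_gap_def [abs_def] charge_gap'_def
  by (rule DERIV_cong[OF DERIV_diff[OF F.charge_fun_DERIV G.charge_fun_DERIV]])
     (auto simp: algebra_simps)

lemma gaps_at_0: "mass_gap 0 = 0" "charge_gap 0 = 0"
  by (simp_all add: mass_gap_def mass_fun_def charge_gap_def charge_fun_def)

lemma mass_gap_eq: "mass_gap r = r * (exp (-2 * lg r) - exp (-2 * lf r))"
  by (simp add: mass_gap_def mass_fun_def algebra_simps)

lemma abs_lam_diff_le_metric_diff:
  assumes "0 \<le> r"
  shows "\<bar>lf r - lg r\<bar> \<le> exp (2 * Lam) / 2 * \<bar>exp (-2 * lf r) - exp (-2 * lg r)\<bar>"
proof -
  have "exp (-2 * Lam) * \<bar>-2 * lf r - -2 * lg r\<bar> \<le> \<bar>exp (-2 * lf r) - exp (-2 * lg r)\<bar>"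
    using F.lam_nonneg_le[OF assms] G.lam_nonneg_le[OF assms] by (intro abs_exp_diff_ge) auto
  then have "exp (2 * Lam) * (exp (-2 * Lam) * (2 * \<bar>lf r - lg r\<bar>))
      \<le> exp (2 * Lam) * \<bar>exp (-2 * lf r) - exp (-2 * lg r)\<bar>"
    by (intro mult_left_mono) (auto simp: abs_if)
  then show ?thesis
    by (simp add: mult.assoc[symmetric] flip: exp_add)
qed

lemma abs_exp_lam_diff_le_lam_diff: "0 \<le> r \<Longrightarrow> \<bar>exp (lf r) - exp (lg r)\<bar> \<le> exp Lam * \<bar>lf r - lg r\<bar>"
  using F.lam_nonneg_le G.lam_nonneg_le by (intro abs_exp_diff_le) auto

lemma abs_charge_sq_diff_le:
  assumes "0 \<le> r"
  shows "\<bar>(charge_fun lf ef r)\<^sup>2 - (charge_fun lg eg r)\<^sup>2\<bar> \<le> 2 * Q_max * r\<^sup>2 * \<bar>charge_gap r\<bar>"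
proof -
  have "\<bar>(charge_fun lf ef r)\<^sup>2 - (charge_fun lg eg r)\<^sup>2\<bar>
      = \<bar>charge_fun lf ef r + charge_fun lg eg r\<bar> * \<bar>charge_gap r\<bar>"
    by (simp add: charge_gap_def power2_eq_square algebra_simps flip: abs_mult)
  also have "\<dots> \<le> 2 * Q_max * r\<^sup>2 * \<bar>charge_gap r\<bar>"
    using abs_charge_fun_le_Q_max[OF assms]
    by (intro mult_right_mono) (auto intro: order_trans[OF abs_triangle_ineq])
  finally show ?thesis .
qed

lemma abs_mass_gap'_le:
  assumes "0 < x"
  shows "\<bar>mass_gap' x\<bar> \<le> 8 * pi * x\<^sup>2 * \<bar>rho_kin f x - rho_kin g x\<bar> + c_Q * \<bar>charge_gap x\<bar>"
proof -
  let ?rho_term = "8 * pi * x\<^sup>2 * (rho_kin f x - rho_kin g x)"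
  let ?field_term = "4 * pi * ((charge_fun lf ef x)\<^sup>2 - (charge_fun lg eg x)\<^sup>2) / x\<^sup>2"
  have "\<bar>?field_term\<bar> = 4 * pi * \<bar>(charge_fun lf ef x)\<^sup>2 - (charge_fun lg eg x)\<^sup>2\<bar> / x\<^sup>2"
    by (simp add: abs_mult)
  also have "\<dots> \<le> 4 * pi * (2 * Q_max * x\<^sup>2 * \<bar>charge_gap x\<bar>) / x\<^sup>2"
    using abs_charge_sq_diff_le[of x] assms by (intro divide_right_mono mult_left_mono) auto
  also have "\<dots> = c_Q * \<bar>charge_gap x\<bar>"
    using assms by (simp add: c_Q_def)
  finally have "\<bar>?field_term\<bar> \<le> c_Q * \<bar>charge_gap x\<bar>" .
  moreover have "\<bar>?rho_term\<bar> = 8 * pi * x\<^sup>2 * \<bar>rho_kin f x - rho_kin g x\<bar>"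
    by (simp add: abs_mult)
  ultimately show ?thesis
    unfolding mass_gap'_def using abs_triangle_ineq[of ?rho_term ?field_term] by linarith
qed

lemma abs_charge_gap'_le:
  assumes "0 \<le> x"
  shows "\<bar>charge_gap' x\<bar>
    \<le> \<bar>q\<bar> * x\<^sup>2 * (exp Lam * vol_u0 * d + M_max * \<bar>exp (lf x) - exp (lg x)\<bar>)"
proof -
  have "exp (lf x) * M0 f x - exp (lg x) * M0 g x
      = exp (lf x) * (M0 f x - M0 g x) + (exp (lf x) - exp (lg x)) * M0 g x"
    by (simp add: algebra_simps)
  also have "\<bar>\<dots>\<bar> \<le> exp Lam * (d * vol_u0) + \<bar>exp (lf x) - exp (lg x)\<bar> * M_max"
    using F.lam_nonneg_le[OF assms] abs_M0_diff_le[of x] abs_M0_le_M_max(2)[of x]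
    by (intro order_trans[OF abs_triangle_ineq] add_mono)
       (auto simp: abs_mult intro!: mult_mono)
  finally have "\<bar>exp (lf x) * M0 f x - exp (lg x) * M0 g x\<bar>
      \<le> exp Lam * vol_u0 * d + M_max * \<bar>exp (lf x) - exp (lg x)\<bar>"
    by (simp add: algebra_simps)
  then show ?thesis
    unfolding charge_gap'_def abs_mult[of "q * x\<^sup>2"] by (simp add: abs_mult mult_left_mono)
qed

lemma abs_charge_gap'_le_mass_gap:
  assumes "0 < x" "x \<le> r0"
  shows "\<bar>charge_gap' x\<bar> \<le> c_M * d + c_lam * \<bar>mass_gap x\<bar>"
proof -
  have "\<bar>exp (lf x) - exp (lg x)\<bar> \<le> exp Lam * (exp (2 * Lam) / 2 * (\<bar>mass_gap x\<bar> / x))"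
  proof -
    have "\<bar>exp (-2 * lf x) - exp (-2 * lg x)\<bar> = \<bar>mass_gap x\<bar> / x"
      using assms by (simp add: mass_gap_eq abs_mult abs_minus_commute)
    then show ?thesis
      using abs_exp_lam_diff_le_lam_diff[of x] abs_lam_diff_le_metric_diff[of x] assms
      by (smt (verit) exp_gt_zero mult_left_mono)
  qed
  then have "\<bar>charge_gap' x\<bar> \<le> \<bar>q\<bar> * x\<^sup>2 * (exp Lam * vol_u0 * d
      + M_max * (exp Lam * (exp (2 * Lam) / 2 * (\<bar>mass_gap x\<bar> / x))))"
    using abs_charge_gap'_le[of x] assms constants_nonneg
    by (smt (verit) mult_left_mono zero_le_power2 abs_ge_zero mult_nonneg_nonneg)
  also have "\<dots> = \<bar>q\<bar> * x\<^sup>2 * exp Lam * vol_u0 * d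
      + \<bar>q\<bar> * M_max * exp (3 * Lam) * x / 2 * \<bar>mass_gap x\<bar>"
    using assms by (simp add: power2_eq_square algebra_simps flip: exp_add)
  also have "\<dots> \<le> c_M * d + c_lam * \<bar>mass_gap x\<bar>"
    unfolding c_M_def c_lam_def using assms constants_nonneg d_nonneg
    by (intro add_mono mult_right_mono mult_left_mono divide_right_mono power_mono) auto
  finally show ?thesis .
qed

lemma abs_mass_gap'_le_charge_gap:
  assumes "0 < x" "x \<le> r0"
  shows "\<bar>mass_gap' x\<bar> \<le> c_rho * d + c_Q * \<bar>charge_gap x\<bar>"
proof -
  have "x\<^sup>2 * \<bar>rho_kin f x - rho_kin g x\<bar> \<le> r0\<^sup>2 * (d * sqrt (1 + u0\<^sup>2) * vol_u0)"
    using assms abs_rho_kin_diff_le[of x] by (intro mult_mono power_mono) auto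
  then have "8 * pi * x\<^sup>2 * \<bar>rho_kin f x - rho_kin g x\<bar> \<le> c_rho * d"
    using mult_left_mono[of _ _ "8 * pi"] by (simp add: c_rho_def ac_simps)
  then show ?thesis
    using abs_mass_gap'_le[OF assms(1)] by linarith
qed

lemma abs_gaps_le_gronwall:
  assumes "0 \<le> r" "r \<le> r0"
  shows "\<bar>mass_gap r\<bar> \<le> K_gron * d" "\<bar>charge_gap r\<bar> \<le> K_gron * d"
proof -
  define K where "K = c_rho + c_Q + c_M + c_lam"
  define V where "V x = d\<^sup>2 + (mass_gap x)\<^sup>2 + (charge_gap x)\<^sup>2" for x
  have "V r \<le> V 0 * exp (K * (r - 0))"
  proof (rule gronwall_within[OF assms(1), where S = "{0..}"])
    fix x :: real assume "0 \<le> x"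
    then show "(V has_real_derivative 2 * mass_gap x * mass_gap' x + 2 * charge_gap x * charge_gap' x)
        (at x within {0..})"
      unfolding V_def [abs_def]
      by (auto intro!: derivative_eq_intros mass_gap_DERIV charge_gap_DERIV)
  next
    fix x :: real assume "0 < x" "x < r"
    then have "\<bar>mass_gap' x\<bar> \<le> c_rho * d + c_Q * \<bar>charge_gap x\<bar>"
      "\<bar>charge_gap' x\<bar> \<le> c_M * d + c_lam * \<bar>mass_gap x\<bar>"
      using assms abs_mass_gap'_le_charge_gap abs_charge_gap'_le_mass_gap by auto
    then have "2 * mass_gap x * mass_gap' x \<le> (c_rho + c_Q) * V x"
      "2 * charge_gap x * charge_gap' x \<le> (c_M + c_lam) * V x"
      using constants_nonneg d_nonneg
        two_mul_le_sum_squares[where a = "mass_gap x" and b = "charge_gap x"]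
        two_mul_le_sum_squares[where a = "charge_gap x" and b = "mass_gap x"]
      by (simp_all add: V_def add_ac)
    then show "2 * mass_gap x * mass_gap' x + 2 * charge_gap x * charge_gap' x \<le> K * V x"
      by (simp add: K_def algebra_simps)
  qed auto
  also have "\<dots> \<le> d\<^sup>2 * exp (K * r0)"
  proof -
    have "K * r \<le> K * r0"
      using assms constants_nonneg by (intro mult_left_mono) (auto simp: K_def)
    then show ?thesis by (simp add: V_def gaps_at_0 mult_left_mono)
  qed
  also have "\<dots> = (K_gron * d)\<^sup>2"
    by (simp add: K_gron_def K_def power_mult_distrib flip: exp_of_nat_mult)
  finally have "V r \<le> (K_gron * d)\<^sup>2" .
  then have "(mass_gap r)\<^sup>2 \<le> (K_gron * d)\<^sup>2" "(charge_gap r)\<^sup>2 \<le> (K_gron * d)\<^sup>2"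
    unfolding V_def by (smt (verit) zero_le_power2)+
  then show "\<bar>mass_gap r\<bar> \<le> K_gron * d" "\<bar>charge_gap r\<bar> \<le> K_gron * d"
    using constants_nonneg d_nonneg by (auto simp: abs_le_square_iff[symmetric])
qed

lemma abs_mass_gap_le_near:
  assumes "0 \<le> r" "r \<le> r0"
  shows "\<bar>mass_gap r\<bar> \<le> (c_rho + c_Q * K_gron) * d * r"
proof -
  have "\<bar>mass_gap r - mass_gap 0\<bar> \<le> (c_rho + c_Q * K_gron) * d * r - (c_rho + c_Q * K_gron) * d * 0"
  proof (rule DERIV_abs_diff_le_majorant[OF assms(1), where S = "{0..}" and h' = mass_gap'
        and k = "\<lambda>x. (c_rho + c_Q * K_gron) * d * x" and k' = "\<lambda>_. (c_rho + c_Q * K_gron) * d"])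
    fix x :: real assume "0 \<le> x"
    then show "(mass_gap has_real_derivative mass_gap' x) (at x within {0..})"
      by (rule mass_gap_DERIV)
    show "((\<lambda>x. (c_rho + c_Q * K_gron) * d * x) has_real_derivative (c_rho + c_Q * K_gron) * d)
        (at x within {0..})"
      by (auto intro!: derivative_eq_intros)
  next
    fix x :: real assume "0 < x" "x < r"
    then have "\<bar>mass_gap' x\<bar> \<le> c_rho * d + c_Q * \<bar>charge_gap x\<bar>"
      using assms by (intro abs_mass_gap'_le_charge_gap) auto
    also have "\<dots> \<le> c_rho * d + c_Q * (K_gron * d)"
      using abs_gaps_le_gronwall(2)[of x] \<open>0 < x\<close> \<open>x < r\<close> assms constants_nonneg
      by (intro add_left_mono mult_left_mono) auto
    finally show "\<bar>mass_gap' x\<bar> \<le> (c_rho + c_Q * K_gron) * d"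
      by (simp add: algebra_simps)
  qed auto
  then show ?thesis by (simp add: gaps_at_0)
qed

lemma abs_mass_gap_le_far:
  assumes "r0 \<le> r"
  shows "\<bar>mass_gap r\<bar> \<le> (1 + c_Q * r0) * K_gron * d"
proof -
  let ?k = "c_Q * r0\<^sup>2 * K_gron * d"
  have k_nonneg: "0 \<le> ?k"
    using constants_nonneg d_nonneg by simp
  have "\<bar>mass_gap r - mass_gap r0\<bar> \<le> - ?k / r - - ?k / r0"
  proof (rule DERIV_abs_diff_le_majorant[OF assms, where S = "{0..}" and h' = mass_gap'
        and k = "\<lambda>x. - ?k / x" and k' = "\<lambda>x. ?k / x\<^sup>2"])
    fix x :: real assume "r0 \<le> x"
    then show "(mass_gap has_real_derivative mass_gap' x) (at x within {0..})"
      using r0_pos by (intro mass_gap_DERIV) simp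
    show "((\<lambda>x. - ?k / x) has_real_derivative ?k / x\<^sup>2) (at x within {0..})"
      using r0_pos \<open>r0 \<le> x\<close> by (auto intro!: derivative_eq_intros simp: power2_eq_square)
  next
    fix x :: real assume x: "r0 < x" "x < r"
    have "charge_fun lf ef x = charge_fun lf ef r0" "charge_fun lg eg x = charge_fun lg eg r0"
      using r0_pos x F.charge_fun_eq_beyond[of x] G.charge_fun_eq_beyond[of x] by simp_all
    then have "\<bar>mass_gap' x\<bar>
        = 4 * pi * \<bar>(charge_fun lf ef r0)\<^sup>2 - (charge_fun lg eg r0)\<^sup>2\<bar> / x\<^sup>2"
      using x r0_pos by (simp add: mass_gap'_def F.rho_kin_eq_0 G.rho_kin_eq_0 abs_mult)
    also have "\<dots> \<le> 4 * pi * (2 * Q_max * r0\<^sup>2 * (K_gron * d)) / x\<^sup>2"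
    proof -
      have "\<bar>(charge_fun lf ef r0)\<^sup>2 - (charge_fun lg eg r0)\<^sup>2\<bar> \<le> 2 * Q_max * r0\<^sup>2 * (K_gron * d)"
        using abs_charge_sq_diff_le[of r0] abs_gaps_le_gronwall(2)[of r0] r0_pos constants_nonneg
        by (smt (verit) mult_left_mono zero_le_power2 mult_nonneg_nonneg)
      then show ?thesis by (intro divide_right_mono mult_left_mono) auto
    qed
    also have "\<dots> = ?k / x\<^sup>2"
      by (simp add: c_Q_def)
    finally show "\<bar>mass_gap' x\<bar> \<le> ?k / x\<^sup>2" .
  qed (use r0_pos in auto)
  also have "\<dots> \<le> ?k / r0"
    using k_nonneg r0_pos assms by simp
  also have "\<dots> = c_Q * r0 * K_gron * d"
    using r0_pos by (simp add: power2_eq_square)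
  finally show ?thesis
    using abs_gaps_le_gronwall(1)[of r0] r0_pos by (simp add: algebra_simps)
qed

lemma abs_metric_diff_le:
  assumes "0 \<le> r"
  shows "\<bar>exp (-2 * lf r) - exp (-2 * lg r)\<bar> \<le> K_metric * d"
proof (cases "r = 0")
  case True
  then show ?thesis
    using constants_nonneg d_nonneg by (simp add: F.lam_0 G.lam_0)
next
  case False
  then have r_pos: "0 < r" using assms by simp
  have metric_eq: "\<bar>exp (-2 * lf r) - exp (-2 * lg r)\<bar> = \<bar>mass_gap r\<bar> / r"
    using r_pos by (simp add: mass_gap_eq abs_mult abs_minus_commute)
  show ?thesis
  proof (cases "r \<le> r0")
    case True
    then have "\<bar>mass_gap r\<bar> / r \<le> (c_rho + c_Q * K_gron) * d"
      using abs_mass_gap_le_near[OF assms] r_pos by (simp add: divide_le_eq)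
    also have "\<dots> \<le> K_metric * d"
      using constants_nonneg d_nonneg r0_pos
      by (intro mult_right_mono) (auto simp: K_metric_def)
    finally show ?thesis using metric_eq by simp
  next
    case False
    then have "\<bar>mass_gap r\<bar> / r \<le> (1 + c_Q * r0) * K_gron * d / r0"
      using abs_mass_gap_le_far[of r] r0_pos constants_nonneg d_nonneg
      by (intro frac_le) auto
    also have "\<dots> = (1 + c_Q * r0) * K_gron / r0 * d"
      by simp
    also have "\<dots> \<le> K_metric * d"
      using constants_nonneg d_nonneg
      by (intro mult_right_mono) (auto simp: K_metric_def)
    finally show ?thesis using metric_eq by simp
  qed
qed

lemma abs_lam_diff_le: "0 \<le> r \<Longrightarrow> \<bar>lf r - lg r\<bar> \<le> K_lam * d"
  using abs_lam_diff_le_metric_diff[of r] abs_metric_diff_le[of r]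
  by (smt (verit) K_lam_def exp_gt_zero mult.assoc mult_left_mono divide_pos_pos)

lemma abs_exp_lam_diff_le: "0 \<le> r \<Longrightarrow> \<bar>exp (lf r) - exp (lg r)\<bar> \<le> exp Lam * K_lam * d"
  using abs_exp_lam_diff_le_lam_diff[of r] abs_lam_diff_le[of r]
  by (smt (verit) exp_gt_zero mult.assoc mult_left_mono)

lemma abs_charge_gap_le:
  assumes "0 \<le> r"
  shows "\<bar>charge_gap r\<bar> \<le> K_charge * d * r\<^sup>2"
proof -
  have "\<bar>charge_gap r\<bar> \<le> \<bar>q\<bar> * exp Lam * (vol_u0 + M_max * K_lam) * d * r0 / 3 * r\<^sup>2"
  proof (rule abs_le_quadratic_if_DERIV[OF _ _ less_imp_le[OF r0_pos] assms charge_gap_DERIV])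
    show "charge_gap 0 = 0" by (rule gaps_at_0)
    show "0 \<le> \<bar>q\<bar> * exp Lam * (vol_u0 + M_max * K_lam) * d"
      using constants_nonneg d_nonneg by simp
  next
    fix x :: real assume "0 < x" "x < r0"
    then have "\<bar>charge_gap' x\<bar> \<le> \<bar>q\<bar> * x\<^sup>2 * (exp Lam * vol_u0 * d + M_max * (exp Lam * K_lam * d))"
      using abs_charge_gap'_le[of x] abs_exp_lam_diff_le[of x] constants_nonneg
      by (smt (verit) mult_left_mono zero_le_power2 abs_ge_zero mult_nonneg_nonneg)
    then show "\<bar>charge_gap' x\<bar> \<le> \<bar>q\<bar> * exp Lam * (vol_u0 + M_max * K_lam) * d * x\<^sup>2"
      by (simp add: algebra_simps)
  next
    fix x :: real assume "r0 \<le> x"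
    then show "charge_gap' x = 0"
      by (simp add: charge_gap'_def F.M0_eq_0 G.M0_eq_0)
  qed
  then show ?thesis
    by (simp add: K_charge_def algebra_simps)
qed

lemma abs_field_le:
  assumes "0 \<le> r"
  shows "\<bar>exp (lf r) * ef r\<bar> \<le> Q_max" "\<bar>exp (lg r) * eg r\<bar> \<le> Q_max"
proof -
  have "\<bar>exp (lam r) * e r\<bar> \<le> Q_max"
    if "\<bar>charge_fun lam e r\<bar> \<le> Q_max * r\<^sup>2" "e 0 = 0" for lam e
  proof (cases "r = 0")
    case False
    then show ?thesis
      using that by (simp add: field_eq_charge_fun_div abs_divide divide_le_eq)
  qed (use that constants_nonneg in simp)
  then show "\<bar>exp (lf r) * ef r\<bar> \<le> Q_max" "\<bar>exp (lg r) * eg r\<bar> \<le> Q_max"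
    using abs_charge_fun_le_Q_max[OF assms] F.e_0 G.e_0 by auto
qed

lemma abs_field_diff_le:
  assumes "0 \<le> r"
  shows "\<bar>exp (lf r) * ef r - exp (lg r) * eg r\<bar> \<le> K_charge * d"
proof (cases "r = 0")
  case True
  then show ?thesis using constants_nonneg d_nonneg by (simp add: F.e_0 G.e_0)
next
  case False
  then have "exp (lf r) * ef r - exp (lg r) * eg r = charge_gap r / r\<^sup>2"
    by (simp add: field_eq_charge_fun_div charge_gap_def diff_divide_distrib)
  then show ?thesis
    using abs_charge_gap_le[OF assms] False by (simp add: abs_divide divide_le_eq)
qed

lemma abs_ef_le:
  assumes "0 \<le> r"
  shows "\<bar>ef r\<bar> \<le> Q_max"
proof -
  have "\<bar>ef r\<bar> = exp (- lf r) * \<bar>exp (lf r) * ef r\<bar>"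
    by (subst eq_exp_neg_mult_field[of ef r lf]) (simp add: abs_mult)
  also have "\<dots> \<le> 1 * Q_max"
    using F.lam_nonneg_le[OF assms] abs_field_le(1)[OF assms] by (intro mult_mono) auto
  finally show ?thesis by simp
qed

lemma abs_e_diff_le:
  assumes "0 \<le> r"
  shows "\<bar>ef r - eg r\<bar> \<le> (K_charge + Q_max * K_lam) * d"
proof -
  define Xf Xg where "Xf = exp (lf r) * ef r" and "Xg = exp (lg r) * eg r"
  have "ef r = exp (- lf r) * Xf" "eg r = exp (- lg r) * Xg"
    unfolding Xf_def Xg_def by (rule eq_exp_neg_mult_field)+
  then have "ef r - eg r = exp (- lf r) * (Xf - Xg) + (exp (- lf r) - exp (- lg r)) * Xg"
    by (simp add: algebra_simps)
  also have "\<bar>\<dots>\<bar> \<le> 1 * (K_charge * d) + (K_lam * d) * Q_max"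
  proof (rule order_trans[OF abs_triangle_ineq add_mono])
    show "\<bar>exp (- lf r) * (Xf - Xg)\<bar> \<le> 1 * (K_charge * d)"
      using F.lam_nonneg_le[OF assms] abs_field_diff_le[OF assms]
      unfolding Xf_def Xg_def abs_mult abs_exp_cancel by (intro mult_mono) auto
    have "\<bar>exp (- lf r) - exp (- lg r)\<bar> \<le> exp 0 * \<bar>- lf r - - lg r\<bar>"
      using F.lam_nonneg_le[OF assms] G.lam_nonneg_le[OF assms] by (intro abs_exp_diff_le) auto
    then have "\<bar>exp (- lf r) - exp (- lg r)\<bar> \<le> K_lam * d"
      using abs_lam_diff_le[OF assms] by simp
    then show "\<bar>(exp (- lf r) - exp (- lg r)) * Xg\<bar> \<le> K_lam * d * Q_max"
      using abs_field_le(2)[OF assms] unfolding Xg_def by (simp add: abs_mult mult_mono)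
  qed
  finally show ?thesis by (simp add: algebra_simps)
qed

lemma abs_field_sq_diff_le:
  assumes "0 \<le> r"
  shows "\<bar>exp (2 * lf r) * (ef r)\<^sup>2 - exp (2 * lg r) * (eg r)\<^sup>2\<bar> \<le> 2 * Q_max * K_charge * d"
proof -
  define Xf Xg where "Xf = exp (lf r) * ef r" and "Xg = exp (lg r) * eg r"
  have "exp (2 * lf r) * (ef r)\<^sup>2 - exp (2 * lg r) * (eg r)\<^sup>2 = (Xf + Xg) * (Xf - Xg)"
    unfolding Xf_def Xg_def by (simp add: power2_eq_square algebra_simps flip: exp_add)
  also have "\<bar>\<dots>\<bar> \<le> (2 * Q_max) * (K_charge * d)"
    unfolding abs_mult using abs_field_le[OF assms] abs_field_diff_le[OF assms] constants_nonneg
    unfolding Xf_def Xg_def by (intro mult_mono) auto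
  finally show ?thesis by (simp add: mult.assoc)
qed

lemma abs_exp2_lam_diff_le:
  assumes "0 \<le> r"
  shows "\<bar>exp (2 * lf r) - exp (2 * lg r)\<bar> \<le> 2 * exp (2 * Lam) * K_lam * d"
proof -
  have "\<bar>exp (2 * lf r) - exp (2 * lg r)\<bar> \<le> exp (2 * Lam) * \<bar>2 * lf r - 2 * lg r\<bar>"
    using F.lam_nonneg_le[OF assms] G.lam_nonneg_le[OF assms] by (intro abs_exp_diff_le) auto
  also have "\<dots> \<le> exp (2 * Lam) * (2 * (K_lam * d))"
    using abs_lam_diff_le[OF assms] by (intro mult_left_mono) auto
  finally show ?thesis by (simp add: algebra_simps)
qed

lemma stability_estimates:
  assumes "0 \<le> r"
  shows "\<bar>lf r\<bar> \<le> C_stab \<and> \<bar>ef r\<bar> \<le> C_stab \<and>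
    \<bar>exp (lf r) - exp (lg r)\<bar> \<le> C_stab * d \<and>
    \<bar>exp (lf r) * ef r - exp (lg r) * eg r\<bar> \<le> C_stab * d \<and>
    \<bar>ef r - eg r\<bar> \<le> C_stab * d \<and>
    \<bar>lf r - lg r\<bar> \<le> C_stab * d \<and>
    \<bar>exp (2 * lf r) * (ef r)\<^sup>2 - exp (2 * lg r) * (eg r)\<^sup>2\<bar> \<le> C_stab * d \<and>
    \<bar>exp (2 * lf r) - exp (2 * lg r)\<bar> \<le> C_stab * d"
proof -
  have scale: "t * d \<le> C_stab * d" if "t \<le> C_stab" for t
    using that d_nonneg by (rule mult_right_mono)
  show ?thesis
    using F.lam_nonneg_le[OF assms] abs_ef_le[OF assms]
      abs_exp_lam_diff_le[OF assms] abs_field_diff_le[OF assms] abs_e_diff_le[OF assms]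
      abs_lam_diff_le[OF assms] abs_field_sq_diff_le[OF assms] abs_exp2_lam_diff_le[OF assms]
      C_stab_ge(1,2) scale[OF C_stab_ge(3)] scale[OF C_stab_ge(4)] scale[OF C_stab_ge(5)]
      scale[OF C_stab_ge(6)] scale[OF C_stab_ge(7)] scale[OF C_stab_ge(8)]
    by auto
qed

end

lemma (in reference_datum) stability:
  assumes "(f, lf, ef) \<in> D q r0 u0 Lam" "sup_dist f g < 1"
  shows "\<forall>r\<ge>0. \<bar>lf r\<bar> \<le> C_stab \<and> \<bar>ef r\<bar> \<le> C_stab \<and>
    \<bar>exp (lf r) - exp (lg r)\<bar> \<le> C_stab * sup_dist f g \<and>
    \<bar>exp (lf r) * ef r - exp (lg r) * eg r\<bar> \<le> C_stab * sup_dist f g \<and>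
    \<bar>ef r - eg r\<bar> \<le> C_stab * sup_dist f g \<and>
    \<bar>lf r - lg r\<bar> \<le> C_stab * sup_dist f g \<and>
    \<bar>exp (2 * lf r) * (ef r)\<^sup>2 - exp (2 * lg r) * (eg r)\<^sup>2\<bar> \<le> C_stab * sup_dist f g \<and>
    \<bar>exp (2 * lf r) - exp (2 * lg r)\<bar> \<le> C_stab * sup_dist f g"
proof -
  interpret F: initial_datum q r0 u0 Lam f lf ef
    by unfold_locales (rule assms(1))
  obtain Bf where "\<And>x v. \<bar>f x v\<bar> \<le> Bf"
    using F.bounded_f by blast
  then interpret perturbed_datum q r0 u0 Lam g lg eg Bg f lf ef "sup_dist f g"
    using abs_le_sup_dist[of f Bf g Bg] g_le assms(2) by unfold_locales auto
  show ?thesis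
    by (intro allI impI stability_estimates)
qed

theorem proposition3p1:
  fixes q r0 u0 Lam :: real
    and g :: "vec3 \<Rightarrow> vec3 \<Rightarrow> real" and lam_g e_g :: "real \<Rightarrow> real"
  assumes "r0 > 0" "u0 > 0" "Lam > 0"
    and "(g, lam_g, e_g) \<in> D q r0 u0 Lam"
  shows "\<exists>\<epsilon>>0. \<exists>C>0. \<forall>f lam_f e_f.
     (f, lam_f, e_f) \<in> D q r0 u0 Lam \<and> sup_dist f g < \<epsilon> \<longrightarrow>
     (\<forall>r\<ge>0.
        \<bar>lam_f r\<bar> \<le> C \<and> \<bar>e_f r\<bar> \<le> C \<and>
        \<bar>exp (lam_f r) - exp (lam_g r)\<bar> \<le> C * sup_dist f g \<and>
        \<bar>exp (lam_f r) * e_f r - exp (lam_g r) * e_g r\<bar> \<le> C * sup_dist f g \<and>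
        \<bar>e_f r - e_g r\<bar> \<le> C * sup_dist f g \<and>
        \<bar>lam_f r - lam_g r\<bar> \<le> C * sup_dist f g \<and>
        \<bar>exp (2 * lam_f r) * (e_f r)\<^sup>2 - exp (2 * lam_g r) * (e_g r)\<^sup>2\<bar> \<le> C * sup_dist f g \<and>
        \<bar>exp (2 * lam_f r) - exp (2 * lam_g r)\<bar> \<le> C * sup_dist f g)"
proof -
  interpret G: initial_datum q r0 u0 Lam g lam_g e_g
    by unfold_locales (rule assms(4))
  obtain Bg where "\<And>x v. \<bar>g x v\<bar> \<le> Bg"
    using G.bounded_f by blast
  then interpret reference_datum q r0 u0 Lam g lam_g e_g Bg
    using assms(1) by unfold_locales
  show ?thesis
    by (intro exI[of _ 1] exI[of _ C_stab] conjI zero_less_one C_stab_ge(9) stability allI impI) auto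
qed

end
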